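(* Let $H$, $G$ be real Hilbert spaces, $Z$ a nonempty closed convex subset of $H\times G$, $x_0\in H\times G$, $\{\lambda_n\}\subset(0,1]$, $\{H_n\}$ closed convex sets with $Z\subset H_n$, and let $\{x_n\},\{x_{n+1/2}\}$ be generated by $x_{n+1/2}=x_n+\lambda_n(P_{H_n}(x_n)-x_n)$, $x_{n+1}=P_{H(x_0,x_n)\cap C_n}(x_0)$, where each $C_n$ is closed convex with $Z\subset C_n\subset H(x_n,x_{n+1/2})$. For $n\ge1$ let $q_n:=P_{H(x_0,x_{n-1})\cap H(x_{n-1},x_{(n-1)+1/2})}(x_0)$ and let $\bar x=P_Z(x_0)$. Then for all $n\ge1$: (i) $\|x_0-x_n\|^2\ge\|x_0-q_n\|^2+\|x_n-q_n\|^2$; (ii) $\|\bar x-x_n\|^2\le\|x_0-\bar x\|^2-\|x_0-x_n\|^2\le\|x_0-\bar x\|^2-\|x_0-q_n\|^2-\|x_n-q_n\|^2$.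
   Context: For $x,y\in H\times G$, $H(x,y):=\{h:\ \langle h-y\mid x-y\rangle\le 0\}$. $P_D$ is the metric projection onto a nonempty closed convex set $D$. *)

theory Defs
  imports "HOL-Analysis.Analysis"
begin

text \<open>Metric projection onto a set D (for D nonempty closed convex in a Hilbert space
  the minimiser exists and is unique).\<close>
definition metric_proj :: "'a::real_inner set \<Rightarrow> 'a \<Rightarrow> 'a" where
  "metric_proj D x = (SOME p. p \<in> D \<and> (\<forall>y\<in>D. dist x p \<le> dist x y))"

definition Hhalf :: "'a::real_inner \<Rightarrow> 'a \<Rightarrow> 'a set" where
  "Hhalf x y = {h. inner (h - y) (x - y) \<le> 0}"

end

theory Submission
  imports Defs
begin

text \<open>Every iterate is the projection of \<open>x\<^sub>0\<close> onto a set containing \<open>Z\<close>, so by the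
  variational inequality of the projection \<open>Z\<close> lies in every half-space
  \<open>H(x\<^sub>0, x\<^sub>n)\<close>; likewise \<open>x\<^sub>n \<in> H(x\<^sub>0, q\<^sub>n)\<close>. Both inequalities are then the same
  obtuse-angle estimate \<open>\<parallel>a - h\<parallel>\<^sup>2 \<ge> \<parallel>a - b\<parallel>\<^sup>2 + \<parallel>h - b\<parallel>\<^sup>2\<close> for \<open>h \<in> H(a, b)\<close>,
  applied with \<open>(a, b, h) = (x\<^sub>0, q\<^sub>n, x\<^sub>n)\<close> and \<open>(x\<^sub>0, x\<^sub>n, P\<^sub>Z x\<^sub>0)\<close>.\<close>

lemma norm_diff_sq_le_of_convex:
  fixes D :: "'a::real_inner set"
  assumes "convex D" "y \<in> D" "z \<in> D"
  shows "norm (y - z)^2 \<le> 2 * (dist x y)^2 + 2 * (dist x z)^2 - 4 * (infdist x D)^2"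
proof -
  have parallelogram: "norm (y - z)^2 = 2 * (dist x y)^2 + 2 * (dist x z)^2 - (2 * dist x (midpoint y z))^2"
    by (simp add: dist_norm midpoint_def power2_norm_eq_inner power_mult_distrib
        inner_diff_left inner_diff_right inner_add_left inner_add_right inner_commute algebra_simps)
  have "midpoint y z \<in> D"
    using convexD[OF assms, of "1/2" "1/2"] by (simp add: midpoint_def scaleR_add_right)
  then have "infdist x D \<le> dist x (midpoint y z)"
    by (rule infdist_le)
  then have "(2 * infdist x D)^2 \<le> (2 * dist x (midpoint y z))^2"
    by (intro power_mono) (auto simp: infdist_nonneg)
  then show ?thesis
    using parallelogram by (simp add: power_mult_distrib)
qed

lemma infdist_minimizing_sequence:
  fixes D :: "'a::metric_space set"
  assumes "D \<noteq> {}"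
  obtains y where "\<And>n. y n \<in> D" and "(\<lambda>n. dist x (y n)) \<longlonglongrightarrow> infdist x D"
proof -
  have "infdist x D \<in> closure (dist x ` D)"
    using closure_contains_Inf[of "dist x ` D"] assms by (simp add: infdist_notempty)
  then obtain u where u: "\<forall>n. u n \<in> dist x ` D" and "u \<longlonglongrightarrow> infdist x D"
    using closure_sequential by blast
  have "\<forall>n. \<exists>z. z \<in> D \<and> u n = dist x z"
    using u by blast
  then obtain y where y: "\<forall>n. y n \<in> D \<and> u n = dist x (y n)"
    by metis
  show ?thesis
  proof (rule that)
    show "y n \<in> D" for n
      using y by blast
    have "(\<lambda>n. dist x (y n)) = u"
      using y by auto
    then show "(\<lambda>n. dist x (y n)) \<longlonglongrightarrow> infdist x D"
      using \<open>u \<longlonglongrightarrow> infdist x D\<close> by simp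
  qed
qed

lemma closest_point_exists_complete:
  fixes D :: "'a::{real_inner,complete_space} set"
  assumes "D \<noteq> {}" "closed D" "convex D"
  shows "\<exists>p. p \<in> D \<and> (\<forall>y\<in>D. dist x p \<le> dist x y)"
proof -
  define d where "d = infdist x D"
  obtain y where yD: "\<And>n. y n \<in> D" and lim_dist: "(\<lambda>n. dist x (y n)) \<longlonglongrightarrow> d"
    using infdist_minimizing_sequence[OF assms(1)] unfolding d_def by blast
  have "Cauchy y"
  proof (rule CauchyI)
    fix e :: real
    assume "0 < e"
    have "(\<lambda>n. (dist x (y n))^2 - d^2) \<longlonglongrightarrow> 0"
      using tendsto_diff[OF tendsto_power[OF lim_dist, of 2] tendsto_const[of "d^2"]] by simp
    from LIMSEQ_D[OF this, of "e^2 / 4"] \<open>0 < e\<close>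
    obtain N where N: "\<And>n. n \<ge> N \<Longrightarrow> \<bar>(dist x (y n))^2 - d^2\<bar> < e^2 / 4"
      by auto
    show "\<exists>M. \<forall>m\<ge>M. \<forall>n\<ge>M. norm (y m - y n) < e"
    proof (intro exI allI impI)
      fix m n
      assume "N \<le> m" "N \<le> n"
      have "norm (y m - y n)^2 \<le> 2 * (dist x (y m))^2 + 2 * (dist x (y n))^2 - 4 * d^2"
        unfolding d_def by (rule norm_diff_sq_le_of_convex[OF assms(3) yD yD])
      also have "\<dots> < e^2"
        using N[OF \<open>N \<le> m\<close>] N[OF \<open>N \<le> n\<close>] by linarith
      finally show "norm (y m - y n) < e"
        using \<open>0 < e\<close> by (simp add: power_less_imp_less_base)
    qed
  qed
  then obtain p where "y \<longlonglongrightarrow> p"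
    using Cauchy_convergent_iff convergent_def by blast
  then have "p \<in> D" and "(\<lambda>n. dist x (y n)) \<longlonglongrightarrow> dist x p"
    using closed_sequentially[OF assms(2)] yD by (auto intro: tendsto_intros)
  then have "dist x p = d"
    using lim_dist LIMSEQ_unique by blast
  then show ?thesis
    using \<open>p \<in> D\<close> infdist_le[of _ D x] unfolding d_def by metis
qed

lemma
  fixes D :: "'a::{real_inner,complete_space} set"
  assumes "D \<noteq> {}" "closed D" "convex D"
  shows metric_proj_in_set: "metric_proj D x \<in> D"
    and metric_proj_dist_le: "\<forall>y\<in>D. dist x (metric_proj D x) \<le> dist x y"
  using someI_ex[OF closest_point_exists_complete[OF assms, of x]]
  unfolding metric_proj_def by auto

lemma Hhalf_eq_halfspace: "Hhalf a b = {h. inner (a - b) h \<le> inner (a - b) b}"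
  by (auto simp: Hhalf_def inner_diff_left inner_commute)

lemma closed_Hhalf: "closed (Hhalf a b)"
  unfolding Hhalf_eq_halfspace by (rule closed_halfspace_le)

lemma convex_Hhalf: "convex (Hhalf a b)"
  unfolding Hhalf_eq_halfspace by (rule convex_halfspace_le)

lemma Hhalf_self [simp]: "Hhalf a a = UNIV"
  by (simp add: Hhalf_def)

lemma subset_Hhalf_metric_proj:
  fixes D :: "'a::{real_inner,complete_space} set"
  assumes "D \<noteq> {}" "closed D" "convex D"
  shows "D \<subseteq> Hhalf x (metric_proj D x)"
proof
  fix y
  assume "y \<in> D"
  then have "inner (x - metric_proj D x) (y - metric_proj D x) \<le> 0"
    by (rule any_closest_point_dot[OF assms(3,2) metric_proj_in_set[OF assms] _
          metric_proj_dist_le[OF assms]])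
  then show "y \<in> Hhalf x (metric_proj D x)"
    by (simp add: Hhalf_def inner_commute)
qed

lemma metric_proj_in_Hhalf_of_subset:
  fixes D Q :: "'a::{real_inner,complete_space} set"
  assumes "D \<noteq> {}" "closed D" "convex D" and "D \<subseteq> Q" "closed Q" "convex Q"
  shows "metric_proj D a \<in> Hhalf a (metric_proj Q a)"
proof -
  have "Q \<subseteq> Hhalf a (metric_proj Q a)"
    using assms by (intro subset_Hhalf_metric_proj) auto
  then show ?thesis
    using metric_proj_in_set[OF assms(1-3)] \<open>D \<subseteq> Q\<close> by blast
qed

lemma norm_diff_sq_ge_of_Hhalf:
  assumes "h \<in> Hhalf a b"
  shows "norm (a - b)^2 + norm (h - b)^2 \<le> norm (a - h)^2"
proof -
  have "a - h = (a - b) - (h - b)"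
    by simp
  then have "norm (a - h)^2 = norm (a - b)^2 + norm (h - b)^2 - 2 * inner (h - b) (a - b)"
    by (simp only: power2_norm_eq_inner inner_diff_left inner_diff_right inner_commute) simp
  then show ?thesis
    using assms by (simp add: Hhalf_def)
qed

lemma subset_Hhalf_iterates:
  fixes Z :: "'a::{real_inner,complete_space} set"
  assumes "Z \<noteq> {}"
    and C: "\<And>n. closed (C n) \<and> convex (C n) \<and> Z \<subseteq> C n"
    and x_step: "\<And>n. x (Suc n) = metric_proj (Hhalf (x 0) (x n) \<inter> C n) (x 0)"
  shows "Z \<subseteq> Hhalf (x 0) (x n)"
proof (induction n)
  case 0
  show ?case by simp
next
  case (Suc n)
  let ?D = "Hhalf (x 0) (x n) \<inter> C n"
  have "Z \<subseteq> ?D"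
    using Suc C[of n] by auto
  moreover have "?D \<subseteq> Hhalf (x 0) (x (Suc n))"
    unfolding x_step using \<open>Z \<subseteq> ?D\<close> \<open>Z \<noteq> {}\<close> C[of n]
    by (intro subset_Hhalf_metric_proj closed_Int convex_Int closed_Hhalf convex_Hhalf) auto
  ultimately show ?case by blast
qed

theorem proposition15:
  fixes Z :: "('h::{real_inner,complete_space} \<times> 'g::{real_inner,complete_space}) set"
    and x :: "nat \<Rightarrow> 'h \<times> 'g"
    and xh :: "nat \<Rightarrow> 'h \<times> 'g"
    and lam :: "nat \<Rightarrow> real"
    and Hs C :: "nat \<Rightarrow> ('h \<times> 'g) set"
  assumes Z: "Z \<noteq> {}" "closed Z" "convex Z"
    and lam: "\<And>n. 0 < lam n \<and> lam n \<le> 1"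
    and Hs: "\<And>n. closed (Hs n) \<and> convex (Hs n) \<and> Z \<subseteq> Hs n"
    and xh_def: "\<And>n. xh n = x n + lam n *\<^sub>R (metric_proj (Hs n) (x n) - x n)"
    and C: "\<And>n. closed (C n) \<and> convex (C n) \<and> Z \<subseteq> C n \<and> C n \<subseteq> Hhalf (x n) (xh n)"
    and x_step: "\<And>n. x (Suc n) = metric_proj (Hhalf (x 0) (x n) \<inter> C n) (x 0)"
  shows "\<forall>n\<ge>1.
     (let q = metric_proj (Hhalf (x 0) (x (n - 1)) \<inter> Hhalf (x (n - 1)) (xh (n - 1))) (x 0);
          xbar = metric_proj Z (x 0)
      in norm (x 0 - x n)^2 \<ge> norm (x 0 - q)^2 + norm (x n - q)^2
       \<and> norm (xbar - x n)^2 \<le> norm (x 0 - xbar)^2 - norm (x 0 - x n)^2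
       \<and> norm (x 0 - xbar)^2 - norm (x 0 - x n)^2
           \<le> norm (x 0 - xbar)^2 - norm (x 0 - q)^2 - norm (x n - q)^2)"
proof (intro allI impI)
  fix n :: nat
  assume "1 \<le> n"
  then obtain k where n: "n = Suc k"
    using Suc_le_D[of 0 n] by auto
  have "\<And>m. closed (C m) \<and> convex (C m) \<and> Z \<subseteq> C m"
    using C by blast
  note Z_H = subset_Hhalf_iterates[OF Z(1) this x_step]
  define D where "D = Hhalf (x 0) (x k) \<inter> C k"
  define Q where "Q = Hhalf (x 0) (x k) \<inter> Hhalf (x k) (xh k)"
  define q where "q = metric_proj Q (x 0)"
  define xbar where "xbar = metric_proj Z (x 0)"
  have "D \<noteq> {}" "closed D" "convex D" "D \<subseteq> Q" "closed Q" "convex Q"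
    using Z(1) Z_H[of k] C[of k] unfolding D_def Q_def
    by (auto simp: closed_Int convex_Int closed_Hhalf convex_Hhalf)
  moreover have "x n = metric_proj D (x 0)"
    unfolding n D_def by (rule x_step)
  ultimately have "x n \<in> Hhalf (x 0) q"
    unfolding q_def by (simp add: metric_proj_in_Hhalf_of_subset)
  then have i: "norm (x 0 - q)^2 + norm (x n - q)^2 \<le> norm (x 0 - x n)^2"
    by (rule norm_diff_sq_ge_of_Hhalf)
  have "xbar \<in> Hhalf (x 0) (x n)"
    unfolding xbar_def by (rule subsetD[OF Z_H metric_proj_in_set[OF Z]])
  from norm_diff_sq_ge_of_Hhalf[OF this]
  have ii: "norm (xbar - x n)^2 \<le> norm (x 0 - xbar)^2 - norm (x 0 - x n)^2"
    by linarith
  have "n - 1 = k"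
    using n by simp
  show "let q = metric_proj (Hhalf (x 0) (x (n - 1)) \<inter> Hhalf (x (n - 1)) (xh (n - 1))) (x 0);
          xbar = metric_proj Z (x 0)
      in norm (x 0 - x n)^2 \<ge> norm (x 0 - q)^2 + norm (x n - q)^2
       \<and> norm (xbar - x n)^2 \<le> norm (x 0 - xbar)^2 - norm (x 0 - x n)^2
       \<and> norm (x 0 - xbar)^2 - norm (x 0 - x n)^2
           \<le> norm (x 0 - xbar)^2 - norm (x 0 - q)^2 - norm (x n - q)^2"
    unfolding Let_def \<open>n - 1 = k\<close> Q_def[symmetric] q_def[symmetric] xbar_def[symmetric]
    using i ii by linarith
qed

end
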